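(* Let $\ell(\bm{w},\bm{x},y)$ be differentiable in $\bm{w}\in\mathbb{R}^d$ with $\|\nabla_{\bm{w}}\ell(\bm{w},\bm{x},y)\|\le G(\bm{x},y)$ for all $\bm{w}\in\mathbb{R}^d$ and all samples, for some function $G(\bm{x},y)\ge0$. Let $\{(\bm{x}_i,y_i)\}_{i=1}^n$ be a dataset, $f_i(\bm{w})=\ell(\bm{w},\bm{x}_i,y_i)$, $f=\frac1n\sum_if_i$, let $\bm{w}^*\in\arg\min_{\bm{w}\in\mathbb{R}^d}f(\bm{w})$, fix $k>1$ and set $G_{\mathcal{Z}}=\left(\frac1n\sum_{i=1}^n G(\bm{x}_i,y_i)^k\right)^{1/k}$. Run unconstrained DP-SGD with constant step size $\eta$, clip norm $\tau$ and noise variance $\sigma_n^2=\frac{\nu T\log(1/\delta)\tau^2}{n^2\varepsilon^2}$. Then for any $0<t<T$, $$\mathbb{E}[\|\bm{w}_t-\bm{w}^*\|]\le\|\bm{w}_0-\bm{w}^*\|+\eta T\left(G_{\mathcal{Z}}+\tau\sqrt{\frac{\nu d\log(1/\delta)}{n^2\varepsilon^2}}\right).$$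
   Context: For $\bm{z}\in\mathbb{R}^d$ and $c>0$, $\mathrm{clip}(\bm{z},c)=\bm{z}\min(1,c/\|\bm{z}\|)$ ($\|\cdot\|$ Euclidean). Unconstrained DP-SGD: given $\bm{w}_0\in\mathbb{R}^d$, $T$, step size $\eta$, a parameter $b\ge1$, clip norm $\tau$, noise variance $\sigma_n^2$: for $t=0,\dots,T-1$, form $\mathcal{S}_t\subseteq[n]$ by including each index independently with probability $b/n$; $\bm{g}_t=\frac1b\sum_{i\in\mathcal{S}_t}\mathrm{clip}(\nabla f_i(\bm{w}_t),\tau)+\bm{\zeta}_t$ with $\bm{\zeta}_t\sim\mathcal{N}(\bm{0},\sigma_n^2I_d)$ independent; $\bm{w}_{t+1}=\bm{w}_t-\eta\bm{g}_t$. $\varepsilon>0$, $\delta\in(0,1)$, $\nu>0$ a fixed absolute constant. Expectation is over the algorithm's randomness. *)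

theory Defs
  imports "HOL-Analysis.Analysis" "HOL-Probability.Probability"
begin

text \<open>Clipping: clip z c = z * min(1, c / norm z)  (with c/0 = 0, so clip 0 c = 0).\<close>
definition clip :: "'a::real_normed_vector \<Rightarrow> real \<Rightarrow> 'a" where
  "clip z c = (min 1 (c / norm z)) *\<^sub>R z"

definition subsample_measure :: "nat \<Rightarrow> real \<Rightarrow> (nat \<Rightarrow> bool) measure" where
  "subsample_measure n b = measure_pmf (Pi_pmf {..<n} False (\<lambda>_. bernoulli_pmf (b / real n)))"

text \<open>Isotropic Gaussian N(0, sigma^2 I_d) on a Euclidean space (sigma = standard deviation):
  independent N(0, sigma^2) coordinates w.r.t. the orthonormal basis.\<close>
definition gauss_vec :: "real \<Rightarrow> 'a::euclidean_space measure" where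
  "gauss_vec \<sigma> = distr (PiM Basis (\<lambda>_. density lborel (normal_density 0 \<sigma>))) borel
      (\<lambda>z. \<Sum>b\<in>Basis. z b *\<^sub>R b)"

definition dpsgd_space :: "nat \<Rightarrow> real \<Rightarrow> real \<Rightarrow> (nat \<Rightarrow> (nat \<Rightarrow> bool) \<times> 'a::euclidean_space) measure" where
  "dpsgd_space n b \<sigma> = PiM UNIV (\<lambda>_::nat. subsample_measure n b \<Otimes>\<^sub>M gauss_vec \<sigma>)"

text \<open>DP-SGD iterates; gr w i is the gradient of f_i at w.\<close>
fun dpsgd_iter :: "('a::euclidean_space \<Rightarrow> nat \<Rightarrow> 'a) \<Rightarrow> nat \<Rightarrow> real \<Rightarrow> real \<Rightarrow> real \<Rightarrow> 'a
      \<Rightarrow> (nat \<Rightarrow> (nat \<Rightarrow> bool) \<times> 'a) \<Rightarrow> nat \<Rightarrow> 'a" where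
  "dpsgd_iter gr n b \<eta> \<tau> w0 \<omega> 0 = w0"
| "dpsgd_iter gr n b \<eta> \<tau> w0 \<omega> (Suc t) =
     (let w = dpsgd_iter gr n b \<eta> \<tau> w0 \<omega> t;
          S = fst (\<omega> t); \<zeta> = snd (\<omega> t);
          g = (1 / b) *\<^sub>R (\<Sum>i\<in>{i. i < n \<and> S i}. clip (gr w i) \<tau>) + \<zeta>
      in w - \<eta> *\<^sub>R g)"

end

theory Submission
  imports Defs
begin

text \<open>
  Unrolling the recursion, \<open>w\<^sub>t - w\<^sup>*\<close> is \<open>w\<^sub>0 - w\<^sup>*\<close> minus \<open>\<eta>\<close> times the accumulated
  clipped minibatch gradients minus \<open>\<eta>\<close> times the accumulated noise. Clipping does not increase
  norms and every index is sampled with probability at most \<open>b/n\<close>, so the expected norm of the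
  gradient part is at most \<open>\<eta> t\<close> times the mean of the \<open>G(x\<^sub>i, y\<^sub>i)\<close>, which is bounded by their
  \<open>k\<close>-th power mean \<open>G\<^sub>Z\<close>. The accumulated noise is centred with second moment \<open>t d \<sigma>\<^sup>2\<close>, so
  its expected norm is at most \<open>\<sigma> sqrt (t d)\<close>, which the choice of \<open>\<sigma>\<close> turns into the second term.
\<close>

section \<open>Power means and moments\<close>

lemma convex_on_powr_nonneg:
  assumes "k \<ge> 1"
  shows "convex_on {0..} (\<lambda>x::real. x powr k)"
proof (rule convex_on_linorderI)
  fix t x y :: real
  assume t: "0 < t" "t < 1" and x: "x \<in> {0..}" and y: "y \<in> {0..}" and "x < y"
  show "((1 - t) *\<^sub>R x + t *\<^sub>R y) powr k \<le> (1 - t) * x powr k + t * y powr k"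
  proof (cases "x = 0")
    case True
    have "(t * y) powr k = t powr k * y powr k" by (rule powr_mult)
    also have "\<dots> \<le> t * y powr k"
      using t assms by (intro mult_right_mono powr_le_one_le) auto
    finally show ?thesis using True assms by simp
  next
    case False
    then show ?thesis using powr_convex[OF assms] t x y \<open>x < y\<close>
      by (auto simp: convex_on_def)
  qed
qed simp

lemma mean_le_power_mean:
  fixes g :: "'i \<Rightarrow> real"
  assumes "finite I" "I \<noteq> {}" "k \<ge> 1" "\<And>i. i \<in> I \<Longrightarrow> g i \<ge> 0"
  shows "(\<Sum>i\<in>I. g i) / card I \<le> ((\<Sum>i\<in>I. g i powr k) / card I) powr (1 / k)"
proof -
  have "(\<Sum>i\<in>I. (1 / card I) *\<^sub>R g i) powr k \<le> (\<Sum>i\<in>I. (1 / card I) * g i powr k)"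
    using assms by (intro convex_on_sum[OF _ _ convex_on_powr_nonneg]) auto
  then have Jensen: "((\<Sum>i\<in>I. g i) / card I) powr k \<le> (\<Sum>i\<in>I. g i powr k) / card I"
    by (simp add: sum_distrib_left sum_divide_distrib[symmetric] divide_inverse_commute)
  have "(\<Sum>i\<in>I. g i) / card I = (((\<Sum>i\<in>I. g i) / card I) powr k) powr (1 / k)"
    using assms by (simp add: powr_powr sum_nonneg)
  also have "\<dots> \<le> ((\<Sum>i\<in>I. g i powr k) / card I) powr (1 / k)"
    using Jensen assms by (intro powr_mono2) auto
  finally show ?thesis .
qed

lemma (in prob_space) nn_integral_le_if_nn_integral_square_le:
  assumes f[measurable]: "f \<in> borel_measurable M" and nonneg: "\<And>x. f x \<ge> 0"
    and square: "(\<integral>\<^sup>+x. ennreal ((f x)\<^sup>2) \<partial>M) \<le> ennreal (c\<^sup>2)" and "c \<ge> 0"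
  shows "(\<integral>\<^sup>+x. ennreal (f x) \<partial>M) \<le> ennreal c"
proof (rule ennreal_le_epsilon)
  fix e :: real assume "e > 0"
  define r where "r = c + e"
  have "r > 0" "c\<^sup>2 \<le> r\<^sup>2" using \<open>e > 0\<close> \<open>c \<ge> 0\<close> by (auto simp: r_def power_mono)
  \<comment> \<open>integrate \<open>2 r f \<le> f\<^sup>2 + r\<^sup>2\<close>; the slack \<open>e\<close> keeps \<open>r\<close> positive when \<open>c = 0\<close>\<close>
  have "ennreal (2 * r) * (\<integral>\<^sup>+x. ennreal (f x) \<partial>M) = (\<integral>\<^sup>+x. ennreal (2 * r * f x) \<partial>M)"
    using \<open>r > 0\<close> nonneg
    by (subst nn_integral_cmult[symmetric]) (auto intro!: nn_integral_cong simp flip: ennreal_mult)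
  also have "\<dots> \<le> (\<integral>\<^sup>+x. ennreal ((f x)\<^sup>2 + r\<^sup>2) \<partial>M)"
    using sum_squares_bound[of "f _" r]
    by (intro nn_integral_mono ennreal_leI) (simp add: power2_eq_square mult_ac)
  also have "\<dots> \<le> ennreal (c\<^sup>2) + ennreal (r\<^sup>2)"
    using square by (simp add: nn_integral_add emeasure_space_1)
  also have "\<dots> = ennreal (c\<^sup>2 + r\<^sup>2)"
    by simp
  also have "\<dots> \<le> ennreal (2 * r * r)"
    using \<open>c\<^sup>2 \<le> r\<^sup>2\<close> by (intro ennreal_leI) (simp add: power2_eq_square)
  also have "\<dots> = ennreal (2 * r) * ennreal r"
    using \<open>r > 0\<close> by (intro ennreal_mult) auto
  finally show "(\<integral>\<^sup>+x. ennreal (f x) \<partial>M) \<le> ennreal c + ennreal e"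
    using \<open>r > 0\<close> \<open>e > 0\<close> \<open>c \<ge> 0\<close> by (simp add: ennreal_mult_le_mult_iff r_def)
qed

section \<open>Isotropic Gaussian noise\<close>

lemma sets_gauss_vec [measurable_cong]: "sets (gauss_vec \<sigma> :: 'a::euclidean_space measure) = sets borel"
  by (simp add: gauss_vec_def)

lemma prob_space_gauss_vec: "\<sigma> > 0 \<Longrightarrow> prob_space (gauss_vec \<sigma> :: 'a::euclidean_space measure)"
  unfolding gauss_vec_def
  by (intro prob_space.prob_space_distr prob_space_PiM prob_space_normal_density) auto

lemma nn_integral_normal_density_square_shift:
  assumes "\<sigma> > 0"
  shows "(\<integral>\<^sup>+x. ennreal ((c + x)\<^sup>2) \<partial>density lborel (normal_density 0 \<sigma>)) = ennreal (c\<^sup>2 + \<sigma>\<^sup>2)"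
proof -
  have moment0: "has_bochner_integral lborel (\<lambda>x. normal_density 0 \<sigma> x) 1"
    using normal_moment_even[of \<sigma> 0 0] assms by simp
  have moment1: "has_bochner_integral lborel (\<lambda>x. normal_density 0 \<sigma> x * x) 0"
    using normal_moment_odd[of \<sigma> 0 0] assms by simp
  have moment2: "has_bochner_integral lborel (\<lambda>x. normal_density 0 \<sigma> x * x\<^sup>2) (\<sigma>\<^sup>2)"
    using normal_moment_even[of \<sigma> 0 1] assms by (simp add: power2_eq_square)
  have "has_bochner_integral lborel
      (\<lambda>x. c\<^sup>2 * normal_density 0 \<sigma> x + 2 * c * (normal_density 0 \<sigma> x * x) + normal_density 0 \<sigma> x * x\<^sup>2)
      (c\<^sup>2 * 1 + 2 * c * 0 + \<sigma>\<^sup>2)"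
    by (intro has_bochner_integral_add has_bochner_integral_mult_right moment0 moment1 moment2)
  then have second_moment: "has_bochner_integral lborel (\<lambda>x. normal_density 0 \<sigma> x * (c + x)\<^sup>2) (c\<^sup>2 + \<sigma>\<^sup>2)"
    by (simp add: power2_eq_square algebra_simps)
  have "(\<integral>\<^sup>+x. ennreal ((c + x)\<^sup>2) \<partial>density lborel (normal_density 0 \<sigma>))
      = (\<integral>\<^sup>+x. ennreal (normal_density 0 \<sigma> x * (c + x)\<^sup>2) \<partial>lborel)"
    by (subst nn_integral_density) (auto simp: ennreal_mult)
  also have "\<dots> = ennreal (c\<^sup>2 + \<sigma>\<^sup>2)"
    using second_moment by (subst nn_integral_eq_integral) (auto simp: has_bochner_integral_iff)
  finally show ?thesis .
qed

lemma power2_norm_eq_sum_Basis: "(norm x)\<^sup>2 = (\<Sum>b\<in>Basis. (x \<bullet> b)\<^sup>2)"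
  unfolding power2_norm_eq_inner by (subst euclidean_inner) (simp add: power2_eq_square)

lemma inner_sum_Basis_scaleR: "b \<in> Basis \<Longrightarrow> (\<Sum>c\<in>Basis. w c *\<^sub>R c) \<bullet> b = w b"
  by (simp add: inner_sum_left inner_Basis if_distrib sum.delta cong: if_cong)

lemma nn_integral_gauss_vec_norm_square_shift:
  fixes v :: "'a::euclidean_space"
  assumes "\<sigma> > 0"
  shows "(\<integral>\<^sup>+z. ennreal ((norm (v + z))\<^sup>2) \<partial>(gauss_vec \<sigma> :: 'a measure))
    = ennreal ((norm v)\<^sup>2 + real DIM('a) * \<sigma>\<^sup>2)"
proof -
  define N where "N = density lborel (normal_density 0 \<sigma>)"
  have "prob_space N" unfolding N_def using prob_space_normal_density assms by simp
  then interpret product_prob_space "\<lambda>_. N" "Basis :: 'a set"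
    by (rule product_prob_spaceI)
  have [measurable_cong]: "sets N = sets borel"
    by (simp add: N_def)
  have "(\<integral>\<^sup>+z. ennreal ((norm (v + z))\<^sup>2) \<partial>(gauss_vec \<sigma> :: 'a measure))
      = (\<integral>\<^sup>+w. ennreal ((norm (v + (\<Sum>b\<in>Basis. w b *\<^sub>R b)))\<^sup>2) \<partial>PiM Basis (\<lambda>_. N))"
    unfolding gauss_vec_def N_def[symmetric] by (rule nn_integral_distr) measurable
  also have "\<dots> = (\<integral>\<^sup>+w. (\<Sum>b\<in>Basis. ennreal ((v \<bullet> b + w b)\<^sup>2)) \<partial>PiM Basis (\<lambda>_. N))"
    by (simp add: power2_norm_eq_sum_Basis[of "v + _"] inner_add_left inner_sum_Basis_scaleR)
  also have "\<dots> = (\<Sum>b\<in>Basis. (\<integral>\<^sup>+w. ennreal ((v \<bullet> b + w b)\<^sup>2) \<partial>PiM Basis (\<lambda>_. N)))"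
    by (rule nn_integral_sum) measurable
  also have "\<dots> = (\<Sum>b\<in>Basis. ennreal ((v \<bullet> b)\<^sup>2 + \<sigma>\<^sup>2))"
  proof (rule sum.cong)
    fix b :: 'a assume b: "b \<in> Basis"
    have "(\<integral>\<^sup>+w. ennreal ((v \<bullet> b + w b)\<^sup>2) \<partial>PiM Basis (\<lambda>_. N))
        = (\<integral>\<^sup>+x. ennreal ((v \<bullet> b + x)\<^sup>2) \<partial>distr (PiM Basis (\<lambda>_. N)) N (\<lambda>w. w b))"
      using b by (intro nn_integral_distr[symmetric]) measurable
    also have "\<dots> = ennreal ((v \<bullet> b)\<^sup>2 + \<sigma>\<^sup>2)"
      unfolding PiM_component[OF b] unfolding N_def by (rule nn_integral_normal_density_square_shift[OF assms])
    finally show "(\<integral>\<^sup>+w. ennreal ((v \<bullet> b + w b)\<^sup>2) \<partial>PiM Basis (\<lambda>_. N)) = ennreal ((v \<bullet> b)\<^sup>2 + \<sigma>\<^sup>2)" .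
  qed simp
  also have "\<dots> = ennreal (\<Sum>b\<in>Basis. (v \<bullet> b)\<^sup>2 + \<sigma>\<^sup>2)"
    by (rule sum_ennreal) simp
  also have "(\<Sum>b\<in>Basis. (v \<bullet> b)\<^sup>2 + \<sigma>\<^sup>2) = (norm v)\<^sup>2 + real DIM('a) * \<sigma>\<^sup>2"
    by (simp add: sum.distrib power2_norm_eq_sum_Basis[of v])
  finally show ?thesis .
qed

lemma nn_integral_norm_sum_square_PiM:
  fixes f :: "'p \<Rightarrow> 'a::euclidean_space" and c :: real
  assumes "prob_space P" and f[measurable]: "f \<in> borel_measurable P"
    and shift: "\<And>v. (\<integral>\<^sup>+p. ennreal ((norm (v + f p))\<^sup>2) \<partial>P) = ennreal ((norm v)\<^sup>2 + c)"
    and "c \<ge> 0" and "finite I"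
  shows "(\<integral>\<^sup>+\<omega>. ennreal ((norm (\<Sum>s\<in>I. f (\<omega> s)))\<^sup>2) \<partial>PiM I (\<lambda>_. P)) = ennreal (real (card I) * c)"
  using \<open>finite I\<close>
proof (induction I rule: finite_induct)
  case (insert i I)
  interpret product_prob_space "\<lambda>_. P" "insert i I"
    by (rule product_prob_spaceI) (rule \<open>prob_space P\<close>)
  interpret PI: prob_space "PiM I (\<lambda>_. P)"
    by (rule prob_space_PiM) (rule \<open>prob_space P\<close>)
  have sum_update: "(\<Sum>s\<in>insert i I. f ((x(i := y)) s)) = (\<Sum>s\<in>I. f (x s)) + f y" for x y
    using insert by (simp add: add.commute) (intro sum.cong, auto)
  have "(\<integral>\<^sup>+\<omega>. ennreal ((norm (\<Sum>s\<in>insert i I. f (\<omega> s)))\<^sup>2) \<partial>PiM (insert i I) (\<lambda>_. P))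
     = (\<integral>\<^sup>+x. \<integral>\<^sup>+y. ennreal ((norm (\<Sum>s\<in>insert i I. f ((x(i := y)) s)))\<^sup>2) \<partial>P \<partial>PiM I (\<lambda>_. P))"
    by (rule product_nn_integral_insert) (use insert in auto)
  also have "\<dots> = (\<integral>\<^sup>+x. ennreal ((norm (\<Sum>s\<in>I. f (x s)))\<^sup>2) + ennreal c \<partial>PiM I (\<lambda>_. P))"
    unfolding sum_update shift using \<open>c \<ge> 0\<close> by simp
  also have "\<dots> = (\<integral>\<^sup>+x. ennreal ((norm (\<Sum>s\<in>I. f (x s)))\<^sup>2) \<partial>PiM I (\<lambda>_. P)) + ennreal c"
    by (subst nn_integral_add) (auto simp: PI.emeasure_space_1)
  also have "\<dots> = ennreal (real (card (insert i I)) * c)"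
    using insert \<open>c \<ge> 0\<close> by (simp add: algebra_simps flip: ennreal_plus del: ennreal_plus)
  finally show ?case .
qed simp

section \<open>Poisson subsampling\<close>

lemma emeasure_subsample_measure_member_le:
  assumes "b \<ge> 0" "i < n"
  shows "emeasure (subsample_measure n b) {S. S i} \<le> ennreal (b / n)"
proof -
  let ?S = "Pi_pmf {..<n} False (\<lambda>_. bernoulli_pmf (b / n))"
  have "emeasure (subsample_measure n b) {S. S i} = emeasure (measure_pmf (map_pmf (\<lambda>S. S i) ?S)) {True}"
    by (simp add: subsample_measure_def vimage_def)
  also have "\<dots> = ennreal (pmf (bernoulli_pmf (b / n)) True)"
    using \<open>i < n\<close> by (simp add: Pi_pmf_component emeasure_pmf_single)
  \<comment> \<open>only an inequality: \<open>bernoulli_pmf\<close> truncates its parameter to \<open>[0, 1]\<close> when \<open>b > n\<close>\<close>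
  also have "\<dots> \<le> ennreal (b / n)"
    using \<open>b \<ge> 0\<close> by (cases "b / n \<le> 1") (auto intro: order_trans[OF pmf_le_1])
  finally show ?thesis .
qed

lemma nn_integral_subsample_sum_le:
  fixes g :: "nat \<Rightarrow> real"
  assumes g: "\<And>i. g i \<ge> 0" and "b \<ge> 0"
  shows "(\<integral>\<^sup>+S. ennreal (\<Sum>i\<in>{i. i < n \<and> S i}. g i) \<partial>subsample_measure n b)
    \<le> ennreal (b / n * (\<Sum>i<n. g i))"
proof -
  have "(\<integral>\<^sup>+S. ennreal (\<Sum>i\<in>{i. i < n \<and> S i}. g i) \<partial>subsample_measure n b)
      = (\<integral>\<^sup>+S. (\<Sum>i<n. ennreal (g i) * indicator {S. S i} S) \<partial>subsample_measure n b)"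
  proof (rule nn_integral_cong)
    fix S :: "nat \<Rightarrow> bool"
    have "(\<Sum>i\<in>{i. i < n \<and> S i}. g i) = (\<Sum>i<n. g i * indicator {S. S i} S)"
      by (simp add: sum.inter_filter[symmetric] indicator_def sum.If_cases Collect_conj_eq lessThan_def)
    then show "ennreal (\<Sum>i\<in>{i. i < n \<and> S i}. g i) = (\<Sum>i<n. ennreal (g i) * indicator {S. S i} S)"
      using g by (simp add: ennreal_mult flip: sum_ennreal)
  qed
  also have "\<dots> = (\<Sum>i<n. ennreal (g i) * emeasure (subsample_measure n b) {S. S i})"
    by (subst nn_integral_sum) (auto simp: subsample_measure_def nn_integral_cmult_indicator)
  also have "\<dots> \<le> (\<Sum>i<n. ennreal (g i) * ennreal (b / n))"
    using assms by (intro sum_mono mult_left_mono emeasure_subsample_measure_member_le) auto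
  also have "\<dots> = (\<Sum>i<n. ennreal (g i * (b / n)))"
    using assms by (intro sum.cong refl ennreal_mult[symmetric]) auto
  also have "\<dots> = ennreal (\<Sum>i<n. g i * (b / n))"
    using assms by (intro sum_ennreal) auto
  also have "(\<Sum>i<n. g i * (b / n)) = b / n * (\<Sum>i<n. g i)"
    by (simp add: sum_distrib_left sum_divide_distrib mult_ac)
  finally show ?thesis .
qed

definition dpsgd_step_measure :: "nat \<Rightarrow> real \<Rightarrow> real \<Rightarrow> ((nat \<Rightarrow> bool) \<times> 'a::euclidean_space) measure" where
  "dpsgd_step_measure n b \<sigma> = subsample_measure n b \<Otimes>\<^sub>M gauss_vec \<sigma>"

lemma prob_space_dpsgd_step_measure:
  "\<sigma> > 0 \<Longrightarrow> prob_space (dpsgd_step_measure n b \<sigma> :: ((nat \<Rightarrow> bool) \<times> 'a::euclidean_space) measure)"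
  unfolding dpsgd_step_measure_def subsample_measure_def
  by (intro prob_space_pair prob_space_measure_pmf prob_space_gauss_vec)

lemma dpsgd_space_eq_PiM: "dpsgd_space n b \<sigma> = PiM UNIV (\<lambda>_. dpsgd_step_measure n b \<sigma>)"
  by (simp add: dpsgd_space_def dpsgd_step_measure_def)

lemma measurable_subsample_measure [measurable]: "f \<in> borel_measurable (subsample_measure n b)"
  by (simp add: subsample_measure_def)

lemma measurable_dpsgd_step_measure_fst [measurable]:
  "(\<lambda>p. f (fst p)) \<in> borel_measurable (dpsgd_step_measure n b \<sigma>)"
  unfolding dpsgd_step_measure_def by measurable

lemma measurable_dpsgd_step_measure_snd [measurable]:
  "snd \<in> borel_measurable (dpsgd_step_measure n b \<sigma> :: ((nat \<Rightarrow> bool) \<times> 'a::euclidean_space) measure)"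
  unfolding dpsgd_step_measure_def
  using measurable_snd[of "subsample_measure n b" "gauss_vec \<sigma> :: 'a measure"]
  by (simp add: measurable_cong_sets[OF refl sets_gauss_vec])

lemma prob_space_dpsgd_space:
  "\<sigma> > 0 \<Longrightarrow> prob_space (dpsgd_space n b \<sigma> :: (nat \<Rightarrow> (nat \<Rightarrow> bool) \<times> 'a::euclidean_space) measure)"
  unfolding dpsgd_space_eq_PiM by (intro prob_space_PiM prob_space_dpsgd_step_measure)

lemma nn_integral_dpsgd_space_component:
  fixes f :: "(nat \<Rightarrow> bool) \<times> 'a::euclidean_space \<Rightarrow> ennreal"
  assumes "\<sigma> > 0" and [measurable]: "f \<in> borel_measurable (dpsgd_step_measure n b \<sigma>)"
  shows "(\<integral>\<^sup>+\<omega>. f (\<omega> s) \<partial>dpsgd_space n b \<sigma>) = (\<integral>\<^sup>+p. f p \<partial>dpsgd_step_measure n b \<sigma>)"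
proof -
  interpret product_prob_space "\<lambda>_. dpsgd_step_measure n b \<sigma> :: ((nat \<Rightarrow> bool) \<times> 'a) measure" UNIV
    by (rule product_prob_spaceI) (rule prob_space_dpsgd_step_measure[OF \<open>\<sigma> > 0\<close>])
  show ?thesis
    unfolding dpsgd_space_eq_PiM
    by (subst PiM_component[of s, symmetric], simp) (subst nn_integral_distr; simp)
qed

lemma nn_integral_dpsgd_subsample_sum_le:
  fixes g :: "nat \<Rightarrow> real"
  assumes "\<sigma> > 0" "b \<ge> 0" "\<And>i. g i \<ge> 0"
  shows "(\<integral>\<^sup>+\<omega>. ennreal (\<Sum>i\<in>{i. i < n \<and> fst (\<omega> s) i}. g i)
      \<partial>(dpsgd_space n b \<sigma> :: (nat \<Rightarrow> (nat \<Rightarrow> bool) \<times> 'a::euclidean_space) measure))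
    \<le> ennreal (b / n * (\<Sum>i<n. g i))"
proof -
  interpret prob_space "gauss_vec \<sigma> :: 'a measure"
    by (rule prob_space_gauss_vec[OF \<open>\<sigma> > 0\<close>])
  have "(\<integral>\<^sup>+\<omega>. ennreal (\<Sum>i\<in>{i. i < n \<and> fst (\<omega> s) i}. g i) \<partial>(dpsgd_space n b \<sigma> :: (nat \<Rightarrow> _ \<times> 'a) measure))
      = (\<integral>\<^sup>+p. ennreal (\<Sum>i\<in>{i. i < n \<and> fst p i}. g i) \<partial>(dpsgd_step_measure n b \<sigma> :: (_ \<times> 'a) measure))"
    using \<open>\<sigma> > 0\<close> by (rule nn_integral_dpsgd_space_component) measurable
  also have "\<dots> = (\<integral>\<^sup>+S. ennreal (\<Sum>i\<in>{i. i < n \<and> S i}. g i) \<partial>subsample_measure n b)"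
    unfolding dpsgd_step_measure_def
    by (subst nn_integral_fst[symmetric]) (simp_all add: emeasure_space_1)
  also have "\<dots> \<le> ennreal (b / n * (\<Sum>i<n. g i))"
    using assms by (intro nn_integral_subsample_sum_le) auto
  finally show ?thesis .
qed

lemma nn_integral_dpsgd_noise_square:
  assumes "\<sigma> > 0"
  shows "(\<integral>\<^sup>+\<omega>. ennreal ((norm (\<Sum>s<t. snd (\<omega> s)))\<^sup>2)
      \<partial>(dpsgd_space n b \<sigma> :: (nat \<Rightarrow> (nat \<Rightarrow> bool) \<times> 'a::euclidean_space) measure))
    = ennreal (real t * (real DIM('a) * \<sigma>\<^sup>2))"
proof -
  let ?P = "dpsgd_step_measure n b \<sigma> :: ((nat \<Rightarrow> bool) \<times> 'a) measure"
  have "prob_space ?P" by (rule prob_space_dpsgd_step_measure[OF assms])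
  then interpret product_prob_space "\<lambda>_. ?P" UNIV
    by (rule product_prob_spaceI)
  interpret gauss: prob_space "gauss_vec \<sigma> :: 'a measure"
    by (rule prob_space_gauss_vec[OF assms])
  have noise_shift: "(\<integral>\<^sup>+p. ennreal ((norm (v + snd p))\<^sup>2) \<partial>?P) = ennreal ((norm v)\<^sup>2 + real DIM('a) * \<sigma>\<^sup>2)"
    for v :: 'a
    unfolding dpsgd_step_measure_def
    by (subst gauss.nn_integral_fst[symmetric])
      (simp_all add: nn_integral_gauss_vec_norm_square_shift[OF assms] subsample_measure_def)
  have "(\<integral>\<^sup>+\<omega>. ennreal ((norm (\<Sum>s<t. snd (\<omega> s)))\<^sup>2) \<partial>PiM UNIV (\<lambda>_. ?P))
      = (\<integral>\<^sup>+\<omega>. ennreal ((norm (\<Sum>s<t. snd (\<omega> s)))\<^sup>2) \<partial>PiM {..<t} (\<lambda>_. ?P))"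
    by (subst distr_PiM_restrict_finite[of "{..<t}", symmetric])
      (auto simp: nn_integral_distr intro!: nn_integral_cong)
  also have "\<dots> = ennreal (real t * (real DIM('a) * \<sigma>\<^sup>2))"
    using nn_integral_norm_sum_square_PiM[OF \<open>prob_space ?P\<close> _ noise_shift, of "{..<t}"]
    by simp
  finally show ?thesis
    by (simp add: dpsgd_space_eq_PiM)
qed

section \<open>Distance of the iterates from a reference point\<close>

lemma norm_clip_le: "c \<ge> 0 \<Longrightarrow> norm (clip z c) \<le> norm z"
  by (simp add: clip_def mult_left_le_one_le)

lemma dpsgd_iter_eq_sum:
  "dpsgd_iter gr n b \<eta> \<tau> w0 \<omega> t = w0 - \<eta> *\<^sub>R (\<Sum>s<t.
     (1 / b) *\<^sub>R (\<Sum>i\<in>{i. i < n \<and> fst (\<omega> s) i}. clip (gr (dpsgd_iter gr n b \<eta> \<tau> w0 \<omega> s) i) \<tau>)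
     + snd (\<omega> s))"
  by (induction t) (simp_all add: Let_def algebra_simps)

lemma norm_dpsgd_iter_diff_le:
  assumes grad_bound: "\<And>w i. norm (gr w i) \<le> g i" and "\<tau> \<ge> 0" "\<eta> \<ge> 0" "b > 0"
  shows "norm (dpsgd_iter gr n b \<eta> \<tau> w0 \<omega> t - w)
    \<le> norm (w0 - w) + \<eta> / b * (\<Sum>s<t. \<Sum>i\<in>{i. i < n \<and> fst (\<omega> s) i}. g i)
      + \<eta> * norm (\<Sum>s<t. snd (\<omega> s))"
proof -
  define A where "A s = (\<Sum>i\<in>{i. i < n \<and> fst (\<omega> s) i}. clip (gr (dpsgd_iter gr n b \<eta> \<tau> w0 \<omega> s) i) \<tau>)"
    for s
  have "norm (A s) \<le> (\<Sum>i\<in>{i. i < n \<and> fst (\<omega> s) i}. g i)" for s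
    unfolding A_def using \<open>\<tau> \<ge> 0\<close>
    by (intro order_trans[OF norm_sum] sum_mono order_trans[OF norm_clip_le grad_bound])
  then have "norm (\<Sum>s<t. A s) \<le> (\<Sum>s<t. \<Sum>i\<in>{i. i < n \<and> fst (\<omega> s) i}. g i)"
    by (intro order_trans[OF norm_sum] sum_mono)
  then have "norm ((\<eta> / b) *\<^sub>R (\<Sum>s<t. A s)) \<le> \<eta> / b * (\<Sum>s<t. \<Sum>i\<in>{i. i < n \<and> fst (\<omega> s) i}. g i)"
    using \<open>\<eta> \<ge> 0\<close> \<open>b > 0\<close> by (simp add: mult_left_mono divide_right_mono)
  moreover have "dpsgd_iter gr n b \<eta> \<tau> w0 \<omega> t - w
      = (w0 - w) - (\<eta> / b) *\<^sub>R (\<Sum>s<t. A s) - \<eta> *\<^sub>R (\<Sum>s<t. snd (\<omega> s))"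
    unfolding A_def by (subst dpsgd_iter_eq_sum) (simp add: sum.distrib scaleR_sum_right algebra_simps)
  ultimately show ?thesis
    using \<open>\<eta> \<ge> 0\<close> by (smt (verit) norm_scaleR norm_triangle_ineq4)
qed

lemma nn_integral_norm_dpsgd_iter_diff_le:
  fixes gr :: "'a::euclidean_space \<Rightarrow> nat \<Rightarrow> 'a"
  assumes grad_bound: "\<And>w i. norm (gr w i) \<le> g i" and "\<tau> \<ge> 0" "\<eta> \<ge> 0" "b > 0" "\<sigma> > 0"
  shows "(\<integral>\<^sup>+\<omega>. ennreal (norm (dpsgd_iter gr n b \<eta> \<tau> w0 \<omega> t - w)) \<partial>dpsgd_space n b \<sigma>)
    \<le> ennreal (norm (w0 - w) + \<eta> * t * ((\<Sum>i<n. g i) / n) + \<eta> * (\<sigma> * sqrt (real t * real DIM('a))))"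
proof -
  let ?M = "dpsgd_space n b \<sigma> :: (nat \<Rightarrow> (nat \<Rightarrow> bool) \<times> 'a) measure"
  define H where "H s \<omega> = (\<Sum>i\<in>{i. i < n \<and> fst (\<omega> s) i}. g i)" for s and \<omega> :: "nat \<Rightarrow> (nat \<Rightarrow> bool) \<times> 'a"
  define V where "V \<omega> = norm (\<Sum>s<t. snd (\<omega> (s::nat)))" for \<omega> :: "nat \<Rightarrow> (nat \<Rightarrow> bool) \<times> 'a"
  interpret M: prob_space ?M
    by (rule prob_space_dpsgd_space[OF \<open>\<sigma> > 0\<close>])
  have g_nonneg: "g i \<ge> 0" for i
    using order_trans[OF norm_ge_zero grad_bound] .
  have H_nonneg: "H s \<omega> \<ge> 0" for s \<omega>
    unfolding H_def using g_nonneg by (simp add: sum_nonneg)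
  have scaled_H: "ennreal (\<eta> / b * H s \<omega>) = ennreal (\<eta> / b) * ennreal (H s \<omega>)" for s \<omega>
    using assms H_nonneg by (intro ennreal_mult) auto
  have [measurable]: "H s \<in> borel_measurable ?M" for s
    unfolding H_def dpsgd_space_eq_PiM by measurable
  have [measurable]: "V \<in> borel_measurable ?M"
    unfolding V_def dpsgd_space_eq_PiM by measurable
  have "(\<integral>\<^sup>+\<omega>. ennreal (norm (dpsgd_iter gr n b \<eta> \<tau> w0 \<omega> t - w)) \<partial>?M)
      \<le> (\<integral>\<^sup>+\<omega>. ennreal (norm (w0 - w)) + (\<Sum>s<t. ennreal (\<eta> / b) * ennreal (H s \<omega>))
           + ennreal \<eta> * ennreal (V \<omega>) \<partial>?M)"
  proof (rule nn_integral_mono)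
    fix \<omega>
    have "ennreal (norm (dpsgd_iter gr n b \<eta> \<tau> w0 \<omega> t - w))
        \<le> ennreal (norm (w0 - w) + \<eta> / b * (\<Sum>s<t. H s \<omega>) + \<eta> * V \<omega>)"
      unfolding H_def V_def using assms by (intro ennreal_leI norm_dpsgd_iter_diff_le)
    also have "\<dots> = ennreal (norm (w0 - w)) + (\<Sum>s<t. ennreal (\<eta> / b) * ennreal (H s \<omega>))
           + ennreal \<eta> * ennreal (V \<omega>)"
      using assms H_nonneg
      by (simp add: V_def sum_nonneg ennreal_mult sum_distrib_left flip: sum_ennreal scaled_H)
    finally show "ennreal (norm (dpsgd_iter gr n b \<eta> \<tau> w0 \<omega> t - w))
        \<le> ennreal (norm (w0 - w)) + (\<Sum>s<t. ennreal (\<eta> / b) * ennreal (H s \<omega>))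
           + ennreal \<eta> * ennreal (V \<omega>)" .
  qed
  also have "\<dots> = ennreal (norm (w0 - w)) + (\<Sum>s<t. ennreal (\<eta> / b) * (\<integral>\<^sup>+\<omega>. ennreal (H s \<omega>) \<partial>?M))
           + ennreal \<eta> * (\<integral>\<^sup>+\<omega>. ennreal (V \<omega>) \<partial>?M)"
    by (simp add: nn_integral_add nn_integral_sum nn_integral_cmult M.emeasure_space_1)
  also have "\<dots> \<le> ennreal (norm (w0 - w)) + (\<Sum>s<t. ennreal (\<eta> / b) * ennreal (b / n * (\<Sum>i<n. g i)))
           + ennreal \<eta> * ennreal (\<sigma> * sqrt (real t * real DIM('a)))"
  proof (intro add_mono sum_mono mult_left_mono order_refl)
    show "(\<integral>\<^sup>+\<omega>. ennreal (H s \<omega>) \<partial>?M) \<le> ennreal (b / n * (\<Sum>i<n. g i))" for s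
      unfolding H_def using assms g_nonneg by (intro nn_integral_dpsgd_subsample_sum_le) auto
    show "(\<integral>\<^sup>+\<omega>. ennreal (V \<omega>) \<partial>?M) \<le> ennreal (\<sigma> * sqrt (real t * real DIM('a)))"
    proof (rule M.nn_integral_le_if_nn_integral_square_le)
      show "V \<in> borel_measurable ?M" by measurable
      show "(\<integral>\<^sup>+\<omega>. ennreal ((V \<omega>)\<^sup>2) \<partial>?M) \<le> ennreal ((\<sigma> * sqrt (real t * real DIM('a)))\<^sup>2)"
        unfolding V_def nn_integral_dpsgd_noise_square[OF \<open>\<sigma> > 0\<close>]
        by (simp add: power_mult_distrib mult_ac)
    qed (use \<open>\<sigma> > 0\<close> in \<open>auto simp: V_def\<close>)
  qed auto
  also have "\<dots> = ennreal (norm (w0 - w) + \<eta> * t * ((\<Sum>i<n. g i) / n) + \<eta> * (\<sigma> * sqrt (real t * real DIM('a))))"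
  proof -
    have "ennreal (\<eta> / b) * ennreal (b / n * (\<Sum>i<n. g i)) = ennreal (\<eta> * ((\<Sum>i<n. g i) / n))"
      using assms g_nonneg by (subst ennreal_mult[symmetric]) (auto simp: sum_nonneg)
    moreover have "ennreal \<eta> * ennreal (\<sigma> * sqrt (real t * real DIM('a))) = ennreal (\<eta> * (\<sigma> * sqrt (real t * real DIM('a))))"
      using assms by (subst ennreal_mult) auto
    ultimately show ?thesis
      using assms g_nonneg by (simp add: sum_nonneg ennreal_of_nat_eq_real_of_nat mult_ac flip: ennreal_mult)
  qed
  finally show ?thesis .
qed

lemma noise_std_le:
  fixes t T :: nat and \<sigma> \<tau> C D :: real
  assumes "\<sigma>\<^sup>2 = T * \<tau>\<^sup>2 * C" "t \<le> T" "\<sigma> \<ge> 0" "\<tau> \<ge> 0" "C \<ge> 0" "D \<ge> 0"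
  shows "\<sigma> * sqrt (t * D) \<le> T * (\<tau> * sqrt (C * D))"
proof -
  have "\<sigma> * sqrt (t * D) = sqrt (\<sigma>\<^sup>2 * (t * D))"
    using \<open>\<sigma> \<ge> 0\<close> by (simp add: real_sqrt_mult)
  also have "\<dots> = sqrt ((real t * T) * (\<tau>\<^sup>2 * (C * D)))"
    using assms(1) by (simp add: mult_ac)
  also have "\<dots> \<le> sqrt ((real T * T) * (\<tau>\<^sup>2 * (C * D)))"
    using assms by (intro real_sqrt_le_mono mult_right_mono) auto
  also have "\<dots> = T * (\<tau> * sqrt (C * D))"
    using assms by (simp add: real_sqrt_mult)
  finally show ?thesis .
qed

theorem mainTheorem10:
  fixes loss :: "'a::euclidean_space \<Rightarrow> 'x \<Rightarrow> 'y \<Rightarrow> real"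
    and grad_loss :: "'a \<Rightarrow> 'x \<Rightarrow> 'y \<Rightarrow> 'a"
    and G :: "'x \<Rightarrow> 'y \<Rightarrow> real"
    and X :: "nat \<Rightarrow> 'x" and Y :: "nat \<Rightarrow> 'y"
    and n T t :: nat
    and w0 wstar :: 'a
    and k \<eta> \<tau> b \<epsilon> \<delta> \<nu> :: real
  assumes diff: "\<And>w x y. GDERIV (\<lambda>v. loss v x y) w :> grad_loss w x y"
    and Gnn: "\<And>x y. G x y \<ge> 0"
    and Gbound: "\<And>w x y. norm (grad_loss w x y) \<le> G x y"
    and n_pos: "n \<ge> 1"
    and argmin: "\<And>w. (1 / real n) * (\<Sum>i<n. loss wstar (X i) (Y i))
                      \<le> (1 / real n) * (\<Sum>i<n. loss w (X i) (Y i))"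
    and k_gt: "k > 1"
    and b_ge: "b \<ge> 1"
    and eta_pos: "\<eta> > 0"
    and tau_pos: "\<tau> > 0"
    and eps_pos: "\<epsilon> > 0"
    and delta: "0 < \<delta>" "\<delta> < 1"
    and nu_pos: "\<nu> > 0"
    and t_range: "0 < t" "t < T"
  shows
    "(\<integral>\<^sup>+ \<omega>. ennreal (norm (dpsgd_iter (\<lambda>w i. grad_loss w (X i) (Y i)) n b \<eta> \<tau> w0 \<omega> t - wstar))
        \<partial>(dpsgd_space n b
             (sqrt (\<nu> * real T * ln (1 / \<delta>) * \<tau>\<^sup>2 / ((real n)\<^sup>2 * \<epsilon>\<^sup>2)))
             :: (nat \<Rightarrow> (nat \<Rightarrow> bool) \<times> 'a) measure))
     \<le> ennreal (norm (w0 - wstar)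
        + \<eta> * real T * (((1 / real n) * (\<Sum>i<n. G (X i) (Y i) powr k)) powr (1 / k)
            + \<tau> * sqrt (\<nu> * real DIM('a) * ln (1 / \<delta>) / ((real n)\<^sup>2 * \<epsilon>\<^sup>2))))"
proof -
  define \<sigma> where "\<sigma> = sqrt (\<nu> * real T * ln (1 / \<delta>) * \<tau>\<^sup>2 / ((real n)\<^sup>2 * \<epsilon>\<^sup>2))"
  define C where "C = \<nu> * ln (1 / \<delta>) / ((real n)\<^sup>2 * \<epsilon>\<^sup>2)"
  define G\<^sub>Z where "G\<^sub>Z = ((1 / real n) * (\<Sum>i<n. G (X i) (Y i) powr k)) powr (1 / k)"
  have "C > 0" "\<sigma> > 0"
    using delta eps_pos n_pos nu_pos t_range tau_pos by (auto simp: C_def \<sigma>_def)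
  have "(\<Sum>i<n. G (X i) (Y i)) / n \<le> G\<^sub>Z"
    using mean_le_power_mean[of "{..<n}" k] n_pos k_gt Gnn by (simp add: G\<^sub>Z_def lessThan_empty_iff)
  then have gradient_le: "t * ((\<Sum>i<n. G (X i) (Y i)) / n) \<le> T * G\<^sub>Z"
    using t_range Gnn by (intro mult_mono) (auto simp: sum_nonneg)
  have noise_le: "\<sigma> * sqrt (real t * real DIM('a)) \<le> T * (\<tau> * sqrt (C * DIM('a)))"
    using t_range \<open>\<sigma> > 0\<close> \<open>C > 0\<close> tau_pos by (intro noise_std_le) (auto simp: \<sigma>_def C_def)
  have "(\<integral>\<^sup>+\<omega>. ennreal (norm (dpsgd_iter (\<lambda>w i. grad_loss w (X i) (Y i)) n b \<eta> \<tau> w0 \<omega> t - wstar))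
        \<partial>(dpsgd_space n b \<sigma> :: (nat \<Rightarrow> (nat \<Rightarrow> bool) \<times> 'a) measure))
      \<le> ennreal (norm (w0 - wstar) + \<eta> * t * ((\<Sum>i<n. G (X i) (Y i)) / n)
          + \<eta> * (\<sigma> * sqrt (real t * real DIM('a))))"
    using Gbound tau_pos eta_pos b_ge \<open>\<sigma> > 0\<close> by (intro nn_integral_norm_dpsgd_iter_diff_le) auto
  also have "\<dots> \<le> ennreal (norm (w0 - wstar) + \<eta> * T * (G\<^sub>Z + \<tau> * sqrt (C * DIM('a))))"
    using mult_left_mono[OF gradient_le, of \<eta>] mult_left_mono[OF noise_le, of \<eta>] eta_pos
    unfolding distrib_left mult.assoc by (intro ennreal_leI) linarith
  also have "C * DIM('a) = \<nu> * real DIM('a) * ln (1 / \<delta>) / ((real n)\<^sup>2 * \<epsilon>\<^sup>2)"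
    by (simp add: C_def)
  finally show ?thesis
    unfolding \<sigma>_def G\<^sub>Z_def .
qed

end
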